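(* Let $P$ be a probability measure on $(\Omega,\mathcal A)$, let $\delta\in(\tfrac12,1)$, and let $\bar{\mathbf C}\subseteq\bar{\mathcal A}$ be a C-class. If $\bar T(P,\delta)\subseteq\bar{\mathbf C}$, then $\bar T(P,\delta)\sim\bar{\mathbf C}$; equivalently, $\bar M_{\bar{\mathbf C}}=\bar P$ on $\bar{\mathcal A}$.
   Context: Let $(\Omega,\mathcal A)$ be a measurable space. For $n\ge1$, $\mathcal A^n$ is the product $\sigma$-algebra on $\Omega^n$; the extended event space is $\bar{\mathcal A}=\bigcup_{n\ge1}\mathcal A^n$, events tagged by their level $n$ (written $A^{(n)}$). For $k\ge1$, $(\Omega^n)^k$ is identified with $\Omega^{nk}$ and $(\mathcal A^n)^k$ with $\mathcal A^{nk}$. For a probability measure $P$ on $\mathcal A$, $P^n$ is its $n$-fold product, $\bar P(A^{(n)})=P^n(A^{(n)})$, and $\bar T(P,\delta)=\{A\in\bar{\mathcal A}:\bar P(A)\ge\delta\}$. For $A^{(n)}\in\mathcal A^n$, an interval $I\subseteq[0,1]$ and $k\in\mathbb N^+$, $S(A^{(n)},I,k)=\{(\omega_1,\dots,\omega_k)\in(\Omega^n)^k:\frac1k\sum_{i=1}^k\chi_{A^{(n)}}(\omega_i)\in I\}$. A class $\bar{\mathbf C}\subseteq\bar{\mathcal A}$ is a C-class if for every $n$ the component $\mathcal C^{(n)}=\bar{\mathbf C}\cap\mathcal A^n$ satisfies: $\Omega^n\in\mathcal C^{(n)}$; if $A\in\mathcal C^{(n)}$, $B\in\mathcal A^n$,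 $A\subseteq B$ then $B\in\mathcal C^{(n)}$; $\mathcal C^{(n)}$ contains no two disjoint events. "$S(A,I,k)\in\bar{\mathbf C}$ definitively" means there is $k_0$ with $S(A,I,k)\in\bar{\mathbf C}$ for all $k>k_0$. The C-measure of a C-class is $\bar M_{\bar{\mathbf C}}(A)=\sup\{\sigma\in[0,1]: S(A,[\sigma,1],k)\in\bar{\mathbf C}\text{ definitively}\}$. Two C-classes are (asymptotically) equivalent, $\bar{\mathbf C}_1\sim\bar{\mathbf C}_2$, if $\bar M_{\bar{\mathbf C}_1}=\bar M_{\bar{\mathbf C}_2}$. *)

theory Defs
  imports "HOL-Probability.Probability"
begin

text \<open>An element of the extended event space is a pair (n, A) with n \<ge> 1 and
A in the product sigma-algebra A^n on Omega^n; points of Omega^n are the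
extensional functions on {..<n}.\<close>

definition prodM :: "'a measure \<Rightarrow> nat \<Rightarrow> (nat \<Rightarrow> 'a) measure" where
  "prodM M n = PiM {..<n} (\<lambda>_. M)"

definition ext_events :: "'a measure \<Rightarrow> (nat \<times> (nat \<Rightarrow> 'a) set) set" where
  "ext_events M = {(n, A). n \<ge> 1 \<and> A \<in> sets (prodM M n)}"

definition Pbar :: "'a measure \<Rightarrow> nat \<times> (nat \<Rightarrow> 'a) set \<Rightarrow> real" where
  "Pbar P e = measure (prodM P (fst e)) (snd e)"

definition Tbar :: "'a measure \<Rightarrow> real \<Rightarrow> (nat \<times> (nat \<Rightarrow> 'a) set) set" where
  "Tbar P \<delta> = {e \<in> ext_events P. Pbar P e \<ge> \<delta>}"

text \<open>Identification (Omega^n)^k = Omega^(nk): the i-th block of a point of Omega^(nk).\<close>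
definition block :: "nat \<Rightarrow> (nat \<Rightarrow> 'a) \<Rightarrow> nat \<Rightarrow> (nat \<Rightarrow> 'a)" where
  "block n \<omega> i = restrict (\<lambda>j. \<omega> (i * n + j)) {..<n}"

definition Sset :: "'a measure \<Rightarrow> nat \<times> (nat \<Rightarrow> 'a) set \<Rightarrow> real set \<Rightarrow> nat
     \<Rightarrow> nat \<times> (nat \<Rightarrow> 'a) set" where
  "Sset M e I k = (fst e * k,
     {\<omega> \<in> space (prodM M (fst e * k)).
        (1 / real k) * (\<Sum>i<k. indicator (snd e) (block (fst e) \<omega> i)) \<in> I})"

definition C_class :: "'a measure \<Rightarrow> (nat \<times> (nat \<Rightarrow> 'a) set) set \<Rightarrow> bool" where
  "C_class M C \<longleftrightarrow> C \<subseteq> ext_events M \<and>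
     (\<forall>n\<ge>1.
        (n, space (prodM M n)) \<in> C \<and>
        (\<forall>A B. (n, A) \<in> C \<longrightarrow> B \<in> sets (prodM M n) \<longrightarrow> A \<subseteq> B \<longrightarrow> (n, B) \<in> C) \<and>
        (\<forall>A B. (n, A) \<in> C \<longrightarrow> (n, B) \<in> C \<longrightarrow> A \<inter> B \<noteq> {}))"

definition definitively :: "(nat \<Rightarrow> bool) \<Rightarrow> bool" where
  "definitively Q \<longleftrightarrow> (\<exists>k0. \<forall>k>k0. Q k)"

definition C_measure :: "'a measure \<Rightarrow> (nat \<times> (nat \<Rightarrow> 'a) set) set
     \<Rightarrow> nat \<times> (nat \<Rightarrow> 'a) set \<Rightarrow> real" where
  "C_measure M C e = Sup {\<sigma> \<in> {0..1}. definitively (\<lambda>k. Sset M e {\<sigma>..1} k \<in> C)}"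

definition C_equiv :: "'a measure \<Rightarrow> (nat \<times> (nat \<Rightarrow> 'a) set) set
     \<Rightarrow> (nat \<times> (nat \<Rightarrow> 'a) set) set \<Rightarrow> bool" where
  "C_equiv M C1 C2 \<longleftrightarrow> (\<forall>e \<in> ext_events M. C_measure M C1 e = C_measure M C2 e)"

end

theory Submission
  imports Defs
begin

text \<open>The k blocks of a point of \<Omega>^(nk) are independent and P^n-distributed, so by
Hoeffding's inequality the frequency with which they hit A concentrates at p = P^n(A): for
\<sigma> < p the event S(A,[\<sigma>,1],k), and for \<sigma> > p the disjoint event S(A,[0,\<sigma>),k), eventually
has probability at least \<delta> and hence lies in T(P,\<delta>) \<subseteq> C. Since C contains no two disjoint
events of the same level, S(A,[\<sigma>,1],k) lies in C definitively for every \<sigma> < p and for no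
\<sigma> > p, so the C-measure of A is p. Because \<delta> > 1/2, T(P,\<delta>) itself contains no two disjoint
events, and the same argument applies to it.\<close>

lemma block_index_less: "i < (k::nat) \<Longrightarrow> j < n \<Longrightarrow> i * n + j < n * k"
proof -
  assume "i < k" "j < n"
  then have "i * n + j < Suc i * n" by simp
  also have "\<dots> \<le> k * n" using \<open>i < k\<close> by (intro mult_le_mono1) simp
  finally show ?thesis by (simp add: mult.commute)
qed

lemma prob_space_prodM: "prob_space P \<Longrightarrow> prob_space (prodM P n)"
  unfolding prodM_def by (intro prob_space_PiM) auto

lemma measurable_block:
  assumes "i < k"
  shows "(\<lambda>\<omega>. block n \<omega> i) \<in> measurable (prodM P (n * k)) (prodM P n)"
  unfolding block_def prodM_def
  by (intro measurable_restrict measurable_component_singleton) (use assms block_index_less in auto)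

lemma distr_block:
  assumes "prob_space P" "i < k"
  shows "distr (prodM P (n * k)) (prodM P n) (\<lambda>\<omega>. block n \<omega> i) = prodM P n"
  using distr_PiM_reindex[of "{..<n * k}" "\<lambda>_. P" "\<lambda>j. i * n + j" "{..<n}"] assms
  unfolding prodM_def block_def by (simp add: inj_on_def block_index_less Pi_iff)

lemma indep_vars_PiM_components:
  assumes P: "prob_space P" and I: "I \<noteq> {}"
  shows "prob_space.indep_vars (PiM I (\<lambda>_. P)) (\<lambda>_. P) (\<lambda>i \<omega>. \<omega> i) I"
proof -
  interpret M: prob_space "PiM I (\<lambda>_. P)" using P by (intro prob_space_PiM) auto
  have "distr (PiM I (\<lambda>_. P)) (PiM I (\<lambda>_. P)) (\<lambda>x. \<lambda>i\<in>I. x i)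
      = distr (PiM I (\<lambda>_. P)) (PiM I (\<lambda>_. P)) (\<lambda>x. x)"
    by (intro distr_cong) (auto simp: space_PiM)
  also have "\<dots> = PiM I (\<lambda>_. P)" by simp
  also have "\<dots> = PiM I (\<lambda>i. distr (PiM I (\<lambda>_. P)) P (\<lambda>\<omega>. \<omega> i))"
    by (intro PiM_cong refl distr_PiM_component[symmetric]) (use P in auto)
  finally show ?thesis
    by (subst M.indep_vars_iff_distr_eq_PiM'[OF I]) auto
qed

lemma disjoint_family_on_blocks: "disjoint_family_on (\<lambda>j. {j * n..<j * n + (n::nat)}) L"
proof (unfold disjoint_family_on_def, intro ballI impI equals0I)
  fix i j x :: nat
  assume "i \<noteq> j" and "x \<in> {i * n..<i * n + n} \<inter> {j * n..<j * n + n}"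
  then have "x div n = i" "x div n = j" by (auto intro!: div_nat_eqI simp: mult.commute)
  with \<open>i \<noteq> j\<close> show False by simp
qed

lemma indep_vars_block_indicators:
  assumes P: "prob_space P" and "n \<ge> 1" "k \<ge> 1" and A: "A \<in> sets (prodM P n)"
  shows "prob_space.indep_vars (prodM P (n * k)) (\<lambda>_. borel)
           (\<lambda>i \<omega>. indicator A (block n \<omega> i) :: real) {..<k}"
proof -
  interpret M: prob_space "prodM P (n * k)" using P by (rule prob_space_prodM)
  let ?block = "\<lambda>j. {j * n..<j * n + n}"
  have "{..<n * k} \<noteq> {}" using assms by (simp add: lessThan_empty_iff)
  from indep_vars_PiM_components[OF P this]
  have "M.indep_vars (\<lambda>_. P) (\<lambda>i \<omega>. \<omega> i) {..<n * k}" unfolding prodM_def .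
  then have blocks: "M.indep_vars (\<lambda>j. PiM (?block j) (\<lambda>_. P))
      (\<lambda>j \<omega>. restrict (\<lambda>i. \<omega> i) (?block j)) {..<k}"
  proof (rule M.indep_vars_restrict[OF _ _ disjoint_family_on_blocks])
    show "?block j \<subseteq> {..<n * k}" if "j \<in> {..<k}" for j
    proof
      fix x assume x: "x \<in> ?block j"
      then have "j * n + (x - j * n) < n * k" using block_index_less[of j k "x - j * n" n] that by auto
      then show "x \<in> {..<n * k}" using x by auto
    qed
  qed
  have measurable_indicator_block:
    "(\<lambda>x. indicator A (\<lambda>l\<in>{..<n}. x (j * n + l)) :: real) \<in> borel_measurable (PiM (?block j) (\<lambda>_. P))"
    for j
  proof -
    have "(\<lambda>x. \<lambda>l\<in>{..<n}. x (j * n + l)) \<in> measurable (PiM (?block j) (\<lambda>_. P)) (prodM P n)"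
      unfolding prodM_def by (intro measurable_restrict measurable_component_singleton) auto
    then show ?thesis using A by (intro measurable_compose[OF _ borel_measurable_indicator])
  qed
  have "M.indep_vars (\<lambda>_. borel)
      (\<lambda>j \<omega>. indicator A (\<lambda>l\<in>{..<n}. restrict (\<lambda>i. \<omega> i) (?block j) (j * n + l)) :: real) {..<k}"
    by (rule M.indep_vars_compose2[OF blocks]) (rule measurable_indicator_block)
  moreover have "(\<lambda>j \<omega>. indicator A (\<lambda>l\<in>{..<n}. restrict (\<lambda>i. \<omega> i) (?block j) (j * n + l)) :: real)
      = (\<lambda>j \<omega>. indicator A (block n \<omega> j))"
    unfolding block_def by (intro ext arg_cong[where f="indicator A"] restrict_ext) simp
  ultimately show ?thesis by simp
qed

definition block_freq :: "nat \<Rightarrow> (nat \<Rightarrow> 'a) set \<Rightarrow> nat \<Rightarrow> (nat \<Rightarrow> 'a) \<Rightarrow> real" where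
  "block_freq n A k \<omega> = (1 / real k) * (\<Sum>i<k. indicator A (block n \<omega> i))"

lemma block_freq_nonneg: "0 \<le> block_freq n A k \<omega>"
  unfolding block_freq_def by (intro mult_nonneg_nonneg sum_nonneg) auto

lemma block_freq_le_1: "block_freq n A k \<omega> \<le> 1"
proof -
  have "(\<Sum>i<k. indicator A (block n \<omega> i) :: real) \<le> (\<Sum>i<k. 1)"
    by (intro sum_mono) (auto simp: indicator_def)
  then show ?thesis by (cases "k = 0") (simp_all add: block_freq_def)
qed

lemma borel_measurable_block_freq:
  assumes A: "A \<in> sets (prodM P n)"
  shows "block_freq n A k \<in> borel_measurable (prodM P (n * k))"
proof -
  have "(\<lambda>\<omega>. indicator A (block n \<omega> i) :: real) \<in> borel_measurable (prodM P (n * k))"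
    if "i < k" for i
    using A measurable_block[OF that] by measurable
  then show ?thesis unfolding block_freq_def[abs_def] by measurable
qed

lemma sets_block_freq:
  assumes "A \<in> sets (prodM P n)" and "I \<in> sets borel"
  shows "{\<omega> \<in> space (prodM P (n * k)). block_freq n A k \<omega> \<in> I} \<in> sets (prodM P (n * k))"
  using measurable_sets[OF borel_measurable_block_freq[OF assms(1)] assms(2)]
  by (simp add: vimage_def Int_def conj_commute)

lemma Hoeffding_block_freq:
  assumes P: "prob_space P" and "n \<ge> 1" "k \<ge> 1" and A: "A \<in> sets (prodM P n)"
  shows Hoeffding_block_freq_ge:
      "measure (prodM P n) A \<le> t \<Longrightarrow>
       measure (prodM P (n * k)) {\<omega> \<in> space (prodM P (n * k)). t \<le> block_freq n A k \<omega>}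
       \<le> exp (-2 * real k * (t - measure (prodM P n) A)\<^sup>2)"
    and Hoeffding_block_freq_le:
      "t \<le> measure (prodM P n) A \<Longrightarrow>
       measure (prodM P (n * k)) {\<omega> \<in> space (prodM P (n * k)). block_freq n A k \<omega> \<le> t}
       \<le> exp (-2 * real k * (measure (prodM P n) A - t)\<^sup>2)"
proof -
  define X where "X = (\<lambda>i \<omega>. indicator A (block n \<omega> i) :: real)"
  interpret M: prob_space "prodM P (n * k)" using P by (rule prob_space_prodM)
  interpret Pn: prob_space "prodM P n" using P by (rule prob_space_prodM)
  have k0: "0 < k" using \<open>k \<ge> 1\<close> by simp
  have distr_X: "distr (prodM P (n * k)) borel (X i) = distr (prodM P n) borel (indicator A)"
    if "i < k" for i
  proof -
    have "distr (prodM P (n * k)) borel (X i)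
        = distr (distr (prodM P (n * k)) (prodM P n) (\<lambda>\<omega>. block n \<omega> i)) borel (indicator A)"
      unfolding X_def
      by (subst distr_distr) (use A measurable_block[OF that] in \<open>auto simp: comp_def\<close>)
    then show ?thesis by (simp add: distr_block[OF P that])
  qed
  interpret H: Hoeffding_ineq_iid "prodM P (n * k)" "{..<k}" X "X 0" 0 1 "M.expectation (X 0)"
  proof unfold_locales
    show "M.indep_vars (\<lambda>_. borel) X {..<k}"
      unfolding X_def using indep_vars_block_indicators[OF P assms(2,3) A] .
    show "distr (prodM P (n * k)) borel (X i) = distr (prodM P (n * k)) borel (X 0)"
      if "i \<in> {..<k}" for i
      using distr_X that k0 by simp
    show "X 0 \<in> borel_measurable (prodM P (n * k))"
      unfolding X_def using A measurable_block[OF k0] by measurable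
    show "AE x in prodM P (n * k). X 0 x \<in> {0..1}" unfolding X_def by (auto simp: indicator_def)
  qed simp_all
  have "M.expectation (X 0)
      = integral\<^sup>L (distr (prodM P (n * k)) (prodM P n) (\<lambda>\<omega>. block n \<omega> 0)) (indicator A)"
    unfolding X_def by (subst integral_distr) (use A measurable_block[OF k0] in auto)
  also have "\<dots> = measure (prodM P n) A"
    using A by (simp add: distr_block[OF P k0])
  finally have mean: "M.expectation (X 0) = measure (prodM P n) A" .
  have freq: "block_freq n A k \<omega> = (\<Sum>i\<in>{..<k}. X i \<omega>) / real (card {..<k})" for \<omega>
    by (simp add: block_freq_def X_def)
  show "measure (prodM P (n * k)) {\<omega> \<in> space (prodM P (n * k)). t \<le> block_freq n A k \<omega>}
        \<le> exp (-2 * real k * (t - measure (prodM P n) A)\<^sup>2)" if "measure (prodM P n) A \<le> t"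
    using H.Hoeffding_ineq_ge'[of "t - measure (prodM P n) A"] that k0
    unfolding freq mean by (simp add: lessThan_empty_iff)
  show "measure (prodM P (n * k)) {\<omega> \<in> space (prodM P (n * k)). block_freq n A k \<omega> \<le> t}
        \<le> exp (-2 * real k * (measure (prodM P n) A - t)\<^sup>2)" if "t \<le> measure (prodM P n) A"
    using H.Hoeffding_ineq_le'[of "measure (prodM P n) A - t"] that k0
    unfolding freq mean by (simp add: lessThan_empty_iff)
qed

lemma exp_Hoeffding_bound_tendsto_0:
  fixes \<epsilon> :: real
  assumes "\<epsilon> \<noteq> 0"
  shows "(\<lambda>k. exp (-2 * real k * \<epsilon>\<^sup>2)) \<longlonglongrightarrow> 0"
proof -
  have "(\<lambda>k. exp (-2 * \<epsilon>\<^sup>2) ^ k) \<longlonglongrightarrow> 0"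
    using assms by (intro LIMSEQ_power_zero) simp
  moreover have "exp (-2 * real k * \<epsilon>\<^sup>2) = exp (-2 * \<epsilon>\<^sup>2) ^ k" for k
    by (simp add: exp_of_nat_mult[symmetric] algebra_simps)
  ultimately show ?thesis by simp
qed

lemma measure_tendsto_1_if_compl_le:
  assumes M: "\<And>k. prob_space (M k)" and S: "\<And>k. S k \<in> sets (M k)"
    and bound: "eventually (\<lambda>k. measure (M k) (space (M k) - S k) \<le> g k) sequentially"
    and g: "g \<longlonglongrightarrow> 0"
  shows "(\<lambda>k. measure (M k) (S k)) \<longlonglongrightarrow> 1"
proof (rule tendsto_sandwich[where f="\<lambda>k. 1 - g k" and h="\<lambda>_. 1"])
  show "eventually (\<lambda>k. 1 - g k \<le> measure (M k) (S k)) sequentially"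
    using bound by eventually_elim (simp add: prob_space.prob_compl[OF M S])
  show "eventually (\<lambda>k. measure (M k) (S k) \<le> 1) sequentially"
    by (simp add: prob_space.prob_le_1[OF M])
  show "(\<lambda>k. 1 - g k) \<longlonglongrightarrow> 1"
    using tendsto_diff[OF tendsto_const g, of 1] by simp
qed simp

lemma prob_block_freq_ge_tendsto_1:
  assumes P: "prob_space P" and n: "n \<ge> 1" and A: "A \<in> sets (prodM P n)"
    and less: "\<sigma> < measure (prodM P n) A"
  shows "(\<lambda>k. measure (prodM P (n * k))
            {\<omega> \<in> space (prodM P (n * k)). block_freq n A k \<omega> \<in> {\<sigma>..1}}) \<longlonglongrightarrow> 1"
proof (rule measure_tendsto_1_if_compl_le
    [where g="\<lambda>k. exp (-2 * real k * (measure (prodM P n) A - \<sigma>)\<^sup>2)"])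
  show "prob_space (prodM P (n * k))" for k using P by (rule prob_space_prodM)
  show "{\<omega> \<in> space (prodM P (n * k)). block_freq n A k \<omega> \<in> {\<sigma>..1}} \<in> sets (prodM P (n * k))"
    for k by (rule sets_block_freq[OF A]) simp
  show "eventually (\<lambda>k. measure (prodM P (n * k)) (space (prodM P (n * k))
           - {\<omega> \<in> space (prodM P (n * k)). block_freq n A k \<omega> \<in> {\<sigma>..1}})
         \<le> exp (-2 * real k * (measure (prodM P n) A - \<sigma>)\<^sup>2)) sequentially"
    using eventually_ge_at_top[of 1]
  proof eventually_elim
    case (elim k)
    interpret M: prob_space "prodM P (n * k)" using P by (rule prob_space_prodM)
    have "space (prodM P (n * k)) - {\<omega> \<in> space (prodM P (n * k)). block_freq n A k \<omega> \<in> {\<sigma>..1}}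
        \<subseteq> {\<omega> \<in> space (prodM P (n * k)). block_freq n A k \<omega> \<le> \<sigma>}"
      using block_freq_le_1 by auto
    then have "measure (prodM P (n * k)) (space (prodM P (n * k))
          - {\<omega> \<in> space (prodM P (n * k)). block_freq n A k \<omega> \<in> {\<sigma>..1}})
        \<le> measure (prodM P (n * k)) {\<omega> \<in> space (prodM P (n * k)). block_freq n A k \<omega> \<le> \<sigma>}"
      using sets_block_freq[OF A, of "{..\<sigma>}"] by (intro M.finite_measure_mono) auto
    also have "\<dots> \<le> exp (-2 * real k * (measure (prodM P n) A - \<sigma>)\<^sup>2)"
      using less by (intro Hoeffding_block_freq_le[OF P n elim A]) simp
    finally show ?case .
  qed
  show "(\<lambda>k. exp (-2 * real k * (measure (prodM P n) A - \<sigma>)\<^sup>2)) \<longlonglongrightarrow> 0"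
    using less by (intro exp_Hoeffding_bound_tendsto_0) simp
qed

lemma prob_block_freq_less_tendsto_1:
  assumes P: "prob_space P" and n: "n \<ge> 1" and A: "A \<in> sets (prodM P n)"
    and greater: "measure (prodM P n) A < \<sigma>"
  shows "(\<lambda>k. measure (prodM P (n * k))
            {\<omega> \<in> space (prodM P (n * k)). block_freq n A k \<omega> \<in> {..<\<sigma>}}) \<longlonglongrightarrow> 1"
proof (rule measure_tendsto_1_if_compl_le
    [where g="\<lambda>k. exp (-2 * real k * (\<sigma> - measure (prodM P n) A)\<^sup>2)"])
  show "prob_space (prodM P (n * k))" for k using P by (rule prob_space_prodM)
  show "{\<omega> \<in> space (prodM P (n * k)). block_freq n A k \<omega> \<in> {..<\<sigma>}} \<in> sets (prodM P (n * k))"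
    for k by (rule sets_block_freq[OF A]) simp
  show "eventually (\<lambda>k. measure (prodM P (n * k)) (space (prodM P (n * k))
           - {\<omega> \<in> space (prodM P (n * k)). block_freq n A k \<omega> \<in> {..<\<sigma>}})
         \<le> exp (-2 * real k * (\<sigma> - measure (prodM P n) A)\<^sup>2)) sequentially"
    using eventually_ge_at_top[of 1]
  proof eventually_elim
    case (elim k)
    have "space (prodM P (n * k)) - {\<omega> \<in> space (prodM P (n * k)). block_freq n A k \<omega> \<in> {..<\<sigma>}}
        = {\<omega> \<in> space (prodM P (n * k)). \<sigma> \<le> block_freq n A k \<omega>}"
      by auto
    then show ?case
      using Hoeffding_block_freq_ge[OF P n elim A, of \<sigma>] greater by simp
  qed
  show "(\<lambda>k. exp (-2 * real k * (\<sigma> - measure (prodM P n) A)\<^sup>2)) \<longlonglongrightarrow> 0"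
    using greater by (intro exp_Hoeffding_bound_tendsto_0) simp
qed

lemma Sset_eq_block_freq:
  "Sset M (n, A) I k = (n * k, {\<omega> \<in> space (prodM M (n * k)). block_freq n A k \<omega> \<in> I})"
  by (simp add: Sset_def block_freq_def)

lemma Sset_in_Tbar:
  assumes "n \<ge> 1" "k \<ge> 1" "A \<in> sets (prodM P n)" "I \<in> sets borel"
    and "\<delta> \<le> measure (prodM P (n * k)) {\<omega> \<in> space (prodM P (n * k)). block_freq n A k \<omega> \<in> I}"
  shows "Sset P (n, A) I k \<in> Tbar P \<delta>"
proof -
  have "n * k \<ge> 1" using assms(1,2) by simp
  then show ?thesis using assms(5) sets_block_freq[OF assms(3,4)]
    unfolding Sset_eq_block_freq Tbar_def ext_events_def Pbar_def by simp
qed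

lemma definitively_iff_eventually: "definitively Q \<longleftrightarrow> eventually Q sequentially"
proof
  assume "definitively Q"
  then obtain k0 where "\<forall>k>k0. Q k" unfolding definitively_def by blast
  then have "\<forall>k\<ge>Suc k0. Q k" by (simp add: Suc_le_eq)
  then show "eventually Q sequentially" unfolding eventually_sequentially by blast
next
  assume "eventually Q sequentially"
  then obtain N where "\<forall>k\<ge>N. Q k" unfolding eventually_sequentially by blast
  then have "\<forall>k>N. Q k" by simp
  then show "definitively Q" unfolding definitively_def by blast
qed

lemma Sup_eq_if_dense_below:
  fixes p :: real
  assumes "0 \<in> S" "{0..<p} \<subseteq> S" "\<And>\<sigma>. \<sigma> \<in> S \<Longrightarrow> \<sigma> \<le> p"
  shows "Sup S = p"
proof (rule cSup_eq_non_empty)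
  show "S \<noteq> {}" using assms(1) by blast
  show "\<sigma> \<le> p" if "\<sigma> \<in> S" for \<sigma> using assms(3) that .
  show "p \<le> y" if upper: "\<And>\<sigma>. \<sigma> \<in> S \<Longrightarrow> \<sigma> \<le> y" for y
  proof (cases "0 < p")
    case False
    then have "p \<le> 0" by simp
    also have "0 \<le> y" using upper[OF assms(1)] .
    finally show ?thesis .
  next
    case True
    then show ?thesis
    proof (rule dense_le_bounded)
      fix w assume "0 < w" "w < p"
      then have "w \<in> S" using assms(2) by auto
      then show "w \<le> y" by (rule upper)
    qed
  qed
qed

lemma C_measure_eq_Pbar:
  assumes P: "prob_space P" and "\<delta> < 1" and T: "Tbar P \<delta> \<subseteq> C"
    and no_disjoint: "\<And>m A B. m \<ge> 1 \<Longrightarrow> (m, A) \<in> C \<Longrightarrow> (m, B) \<in> C \<Longrightarrow> A \<inter> B \<noteq> {}"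
    and e: "(n, A) \<in> ext_events P"
  shows "C_measure P C (n, A) = Pbar P (n, A)"
proof -
  have n: "n \<ge> 1" and A: "A \<in> sets (prodM P n)" using e by (auto simp: ext_events_def)
  interpret Pn: prob_space "prodM P n" using P by (rule prob_space_prodM)
  define p where "p = measure (prodM P n) A"
  have "p \<le> 1" unfolding p_def by (rule Pn.prob_le_1)
  define \<Sigma> where "\<Sigma> = {\<sigma> \<in> {0..1}. definitively (\<lambda>k. Sset P (n, A) {\<sigma>..1} k \<in> C)}"
  let ?freq_in = "\<lambda>I k. {\<omega> \<in> space (prodM P (n * k)). block_freq n A k \<omega> \<in> I}"
  have in_C: "eventually (\<lambda>k. Sset P (n, A) I k \<in> C) sequentially"
    if I: "I \<in> sets borel" and "(\<lambda>k. measure (prodM P (n * k)) (?freq_in I k)) \<longlonglongrightarrow> 1" for I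
  proof -
    have "eventually (\<lambda>k. \<delta> < measure (prodM P (n * k)) (?freq_in I k)) sequentially"
      using that(2) \<open>\<delta> < 1\<close> by (rule order_tendstoD)
    then show ?thesis using eventually_ge_at_top[of 1]
      by eventually_elim (use T Sset_in_Tbar[OF n _ A I] in \<open>blast intro: less_imp_le\<close>)
  qed
  have "0 \<in> \<Sigma>"
  proof -
    have "?freq_in {0..1} k = space (prodM P (n * k))" for k
      using block_freq_nonneg block_freq_le_1 by auto
    then have "(\<lambda>k. measure (prodM P (n * k)) (?freq_in {0..1} k)) \<longlonglongrightarrow> 1"
      by (simp add: prob_space.prob_space[OF prob_space_prodM[OF P]])
    then show ?thesis unfolding \<Sigma>_def definitively_iff_eventually using in_C[of "{0..1}"] by simp
  qed
  moreover have "{0..<p} \<subseteq> \<Sigma>"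
  proof
    fix \<sigma> assume \<sigma>: "\<sigma> \<in> {0..<p}"
    have "eventually (\<lambda>k. Sset P (n, A) {\<sigma>..1} k \<in> C) sequentially"
      by (intro in_C prob_block_freq_ge_tendsto_1[OF P n A]) (use \<sigma> in \<open>auto simp: p_def\<close>)
    then show "\<sigma> \<in> \<Sigma>"
      using \<sigma> \<open>p \<le> 1\<close> unfolding \<Sigma>_def definitively_iff_eventually by auto
  qed
  moreover have "\<sigma> \<le> p" if "\<sigma> \<in> \<Sigma>" for \<sigma>
  proof (rule ccontr)
    assume "\<not> \<sigma> \<le> p"
    have "eventually (\<lambda>k. Sset P (n, A) {\<sigma>..1} k \<in> C) sequentially"
      using that unfolding \<Sigma>_def definitively_iff_eventually by simp
    moreover have "eventually (\<lambda>k. Sset P (n, A) {..<\<sigma>} k \<in> C) sequentially"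
      by (intro in_C prob_block_freq_less_tendsto_1[OF P n A])
        (use \<open>\<not> \<sigma> \<le> p\<close> in \<open>auto simp: p_def\<close>)
    ultimately have "eventually (\<lambda>k. k \<ge> 1 \<and> Sset P (n, A) {\<sigma>..1} k \<in> C
        \<and> Sset P (n, A) {..<\<sigma>} k \<in> C) sequentially"
      using eventually_ge_at_top[of 1] by eventually_elim blast
    then obtain k where "k \<ge> 1" "Sset P (n, A) {\<sigma>..1} k \<in> C" "Sset P (n, A) {..<\<sigma>} k \<in> C"
      by (auto simp: eventually_sequentially)
    then have "(n * k, ?freq_in {\<sigma>..1} k) \<in> C" "(n * k, ?freq_in {..<\<sigma>} k) \<in> C"
      by (simp_all add: Sset_eq_block_freq)
    moreover have "n * k \<ge> 1" using n \<open>k \<ge> 1\<close> by simp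
    moreover have "?freq_in {\<sigma>..1} k \<inter> ?freq_in {..<\<sigma>} k = {}" by auto
    ultimately show False using no_disjoint by blast
  qed
  ultimately have "Sup \<Sigma> = p" by (rule Sup_eq_if_dense_below)
  then show ?thesis unfolding C_measure_def Pbar_def \<Sigma>_def[symmetric] by (simp add: p_def)
qed

lemma Tbar_no_disjoint:
  assumes P: "prob_space P" and "1/2 < \<delta>"
    and "(m, A) \<in> Tbar P \<delta>" and "(m, B) \<in> Tbar P \<delta>"
  shows "A \<inter> B \<noteq> {}"
proof
  assume disj: "A \<inter> B = {}"
  interpret M: prob_space "prodM P m" using P by (rule prob_space_prodM)
  have sets: "A \<in> sets (prodM P m)" "B \<in> sets (prodM P m)"
    and "measure (prodM P m) A \<ge> \<delta>" "measure (prodM P m) B \<ge> \<delta>"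
    using assms(3,4) by (auto simp: Tbar_def ext_events_def Pbar_def)
  then have "measure (prodM P m) (A \<union> B) \<ge> 2 * \<delta>"
    using M.finite_measure_Union[OF sets disj] by simp
  then show False using M.prob_le_1[of "A \<union> B"] \<open>1/2 < \<delta>\<close> by simp
qed

theorem theorem1:
  fixes P :: "'a measure" and \<delta> :: real and C :: "(nat \<times> (nat \<Rightarrow> 'a) set) set"
  assumes "prob_space P"
    and "1/2 < \<delta>" and "\<delta> < 1"
    and "C_class P C"
    and "Tbar P \<delta> \<subseteq> C"
  shows "C_equiv P (Tbar P \<delta>) C \<and> (\<forall>e \<in> ext_events P. C_measure P C e = Pbar P e)"
proof -
  have C_no_disjoint: "\<And>m A B. m \<ge> 1 \<Longrightarrow> (m, A) \<in> C \<Longrightarrow> (m, B) \<in> C \<Longrightarrow> A \<inter> B \<noteq> {}"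
    using assms(4) unfolding C_class_def by blast
  have "C_measure P C e = Pbar P e" if "e \<in> ext_events P" for e
    using C_measure_eq_Pbar[OF assms(1,3,5) C_no_disjoint, where n="fst e" and A="snd e"] that by simp
  moreover have "C_measure P (Tbar P \<delta>) e = Pbar P e" if "e \<in> ext_events P" for e
    using C_measure_eq_Pbar[OF assms(1,3) subset_refl Tbar_no_disjoint[OF assms(1,2)],
        where n="fst e" and A="snd e"] that by simp
  ultimately show ?thesis unfolding C_equiv_def by simp
qed

end
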